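(* Let $\mathcal{T}\subset\mathbb{R}$ be a compact interval of positive length $|\mathcal{T}|$, let $y_1,\dots,y_n$ and $g$ be continuous real functions on $\mathcal{T}$, and let $\alpha\in[1/(l+1),1)$. Define $k$, $\mathcal{H}_2$ and $M$ as in the context, and assume $M(t)>0$ for all $t\in\mathcal{T}$. Let $$\bar s^c(t):=\frac{M(t)}{\int_{\mathcal{T}}M(u)\,du},\qquad s^0(t):=\frac{1}{|\mathcal{T}|}.$$ Then $\mathcal{Q}(s^0)\ge\mathcal{Q}(\bar s^c)$. Moreover, $\mathcal{Q}(s^0)=\mathcal{Q}(\bar s^c)$ if and only if $M$ is constant almost everywhere on $\mathcal{T}$.
   Context: $\{1,\dots,n\}$ is partitioned into $\mathcal{I}_1$ with $|\mathcal{I}_1|=m\ge1$ and $\mathcal{I}_2$ with $|\mathcal{I}_2|=l\ge1$. Put $r:=\lceil (l+1)(1-\alpha)\rceil$. Let $k$ be the $r$-th smallest value of the multiset $\{\sup_{t\in\mathcal{T}}|y_h(t)-g(t)|:h\in\mathcal{I}_2\}$. Define $$\mathcal{H}_2:=\{j\in\mathcal{I}_2:\sup_{t\in\mathcal{T}}|y_j(t)-g(t)|\le k\},\qquad M(t):=\max_{j\in\mathcal{H}_2}|y_j(t)-g(t)|.$$ For a bounded function $u:\mathcal{T}\to(0,\infty)$, define the scores $R^u_h:=\sup_{t\in\mathcal{T}}|y_h(t)-g(t)|/u(t)$ for $h\in\mathcal{I}_2$. Let $k^u$ be the $r$-th smallest value of $\{R^u_h:h\in\mathcal{I}_2\}$.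 The size of the band is $\mathcal{Q}(u):=\int_{\mathcal{T}}2k^u u(t)\,dt$; this equals $2k^u$ when $\int_{\mathcal{T}}u=1$. *)

theory Defs
  imports "HOL-Analysis.Analysis" "HOL-Library.Multiset"
begin

definition kth_smallest :: "nat \<Rightarrow> ('b \<Rightarrow> real) \<Rightarrow> 'b set \<Rightarrow> real" where
  "kth_smallest r f I = sorted_list_of_multiset (image_mset f (mset_set I)) ! (r - 1)"

definition conf_rank :: "nat \<Rightarrow> real \<Rightarrow> nat" where
  "conf_rank l \<alpha> = nat \<lceil>(real l + 1) * (1 - \<alpha>)\<rceil>"

definition score :: "real set \<Rightarrow> (nat \<Rightarrow> real \<Rightarrow> real) \<Rightarrow> (real \<Rightarrow> real) \<Rightarrow> (real \<Rightarrow> real) \<Rightarrow> nat \<Rightarrow> real" where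
  "score T y g u h = Sup ((\<lambda>t. \<bar>y h t - g t\<bar> / u t) ` T)"

definition sup_dev :: "real set \<Rightarrow> (nat \<Rightarrow> real \<Rightarrow> real) \<Rightarrow> (real \<Rightarrow> real) \<Rightarrow> nat \<Rightarrow> real" where
  "sup_dev T y g h = Sup ((\<lambda>t. \<bar>y h t - g t\<bar>) ` T)"

definition kval :: "real set \<Rightarrow> nat set \<Rightarrow> nat \<Rightarrow> (nat \<Rightarrow> real \<Rightarrow> real) \<Rightarrow> (real \<Rightarrow> real) \<Rightarrow> real" where
  "kval T I2 r y g = kth_smallest r (sup_dev T y g) I2"

definition H2set :: "real set \<Rightarrow> nat set \<Rightarrow> nat \<Rightarrow> (nat \<Rightarrow> real \<Rightarrow> real) \<Rightarrow> (real \<Rightarrow> real) \<Rightarrow> nat set" where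
  "H2set T I2 r y g = {j \<in> I2. sup_dev T y g j \<le> kval T I2 r y g}"

definition Mfun :: "real set \<Rightarrow> nat set \<Rightarrow> nat \<Rightarrow> (nat \<Rightarrow> real \<Rightarrow> real) \<Rightarrow> (real \<Rightarrow> real) \<Rightarrow> real \<Rightarrow> real" where
  "Mfun T I2 r y g t = Max ((\<lambda>j. \<bar>y j t - g t\<bar>) ` H2set T I2 r y g)"

definition band_size :: "real set \<Rightarrow> nat set \<Rightarrow> nat \<Rightarrow> (nat \<Rightarrow> real \<Rightarrow> real) \<Rightarrow> (real \<Rightarrow> real) \<Rightarrow> (real \<Rightarrow> real) \<Rightarrow> real" where
  "band_size T I2 r y g u = integral T (\<lambda>t. 2 * kth_smallest r (score T y g u) I2 * u t)"

end

theory Submission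
  imports Defs
begin

text \<open>The uniform weight
  scales every score by \<open>|T|\<close>, so \<open>Q(s\<^sup>0) = 2|T|k\<close>. Under the weight \<open>M/\<integral>M\<close> each of those
  curves has score at most \<open>\<integral>M\<close>, so \<open>Q(s\<^sup>c) \<le> 2\<integral>M \<le> 2|T|k\<close> since \<open>M \<le> k\<close>. Equality forces
  \<open>\<integral>M = |T|k\<close>, i.e. \<open>M = k\<close> by continuity; conversely a continuous \<open>M\<close> that is constant almost
  everywhere is constant, and then the two weights coincide.\<close>

lemma sorted_nth_le_of_length_filter:
  fixes xs :: "real list"
  assumes "sorted xs" "1 \<le> r" "r \<le> length (filter (\<lambda>x. x \<le> v) xs)"
  shows "xs ! (r - 1) \<le> v"
proof (rule ccontr)
  assume "\<not> xs ! (r - 1) \<le> v"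
  moreover have "xs ! (r - 1) \<le> x" if "x \<in> set (drop (r - 1) xs)" for x
    using that assms(1) by (auto simp: in_set_conv_nth intro!: sorted_nth_mono)
  ultimately have "\<forall>x\<in>set (drop (r - 1) xs). \<not> x \<le> v"
    by force
  hence "filter (\<lambda>x. x \<le> v) xs = filter (\<lambda>x. x \<le> v) (take (r - 1) xs)"
    by (metis append_Nil2 append_take_drop_id filter_append filter_False)
  moreover have "length (filter (\<lambda>x. x \<le> v) (take (r - 1) xs)) \<le> r - 1"
    by (metis length_filter_le length_take min.boundedE)
  ultimately show False using assms(2,3) by simp
qed

lemma length_filter_le_nth_of_sorted:
  fixes xs :: "real list"
  assumes "sorted xs" "1 \<le> r" "r \<le> length xs"
  shows "r \<le> length (filter (\<lambda>x. x \<le> xs ! (r - 1)) xs)"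
proof -
  have "\<forall>x\<in>set (take r xs). x \<le> xs ! (r - 1)"
    using assms by (auto simp: in_set_conv_nth intro!: sorted_nth_mono) linarith+
  hence "r = length (filter (\<lambda>x. x \<le> xs ! (r - 1)) (take r xs))"
    using assms(3) by simp
  also have "\<dots> \<le> length (filter (\<lambda>x. x \<le> xs ! (r - 1)) xs)"
    by (metis append_take_drop_id filter_append le_add1 length_append)
  finally show ?thesis .
qed

lemma card_filter_eq_length_filter_sorted:
  assumes "finite I"
  shows "card {h\<in>I. P (f h)} = length (filter P (sorted_list_of_multiset (image_mset f (mset_set I))))"
proof -
  have "length (filter P (sorted_list_of_multiset (image_mset f (mset_set I))))
      = size (filter_mset P (image_mset f (mset_set I)))"
    by (metis mset_filter mset_sorted_list_of_multiset size_mset)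
  also have "\<dots> = card {h\<in>I. P (f h)}"
    using assms by (simp add: filter_mset_image_mset)
  finally show ?thesis by simp
qed

lemma length_sorted_list_of_image_mset_set:
  "length (sorted_list_of_multiset (image_mset f (mset_set I))) = card I"
  by (metis mset_sorted_list_of_multiset size_image_mset size_mset size_mset_set)

lemma kth_smallest_le:
  fixes f :: "'b \<Rightarrow> real"
  assumes "finite I" "1 \<le> r" "r \<le> card {h\<in>I. f h \<le> v}"
  shows "kth_smallest r f I \<le> v"
  unfolding kth_smallest_def
  using assms card_filter_eq_length_filter_sorted[of I "\<lambda>x. x \<le> v" f]
  by (intro sorted_nth_le_of_length_filter) auto

lemma card_le_kth_smallest:
  fixes f :: "'b \<Rightarrow> real"
  assumes "finite I" "1 \<le> r" "r \<le> card I"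
  shows "r \<le> card {h\<in>I. f h \<le> kth_smallest r f I}"
proof -
  define xs where "xs = sorted_list_of_multiset (image_mset f (mset_set I))"
  have "r \<le> length (filter (\<lambda>x. x \<le> xs ! (r - 1)) xs)"
    using assms unfolding xs_def
    by (intro length_filter_le_nth_of_sorted) (auto simp: length_sorted_list_of_image_mset_set)
  thus ?thesis
    using card_filter_eq_length_filter_sorted[OF assms(1), of "\<lambda>x. x \<le> xs ! (r - 1)" f]
    unfolding kth_smallest_def xs_def by simp
qed

lemma kth_smallest_cong:
  assumes "\<And>h. h \<in> I \<Longrightarrow> f h = f' h"
  shows "kth_smallest r f I = kth_smallest r f' I"
proof -
  have "image_mset f (mset_set I) = image_mset f' (mset_set I)"
    by (cases "finite I") (auto intro!: image_mset_cong simp: assms)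
  thus ?thesis unfolding kth_smallest_def by simp
qed

lemma kth_smallest_cmult:
  fixes f :: "'b \<Rightarrow> real"
  assumes "c > 0" "1 \<le> r" "r \<le> card I"
  shows "kth_smallest r (\<lambda>h. c * f h) I = c * kth_smallest r f I"
proof -
  define xs where "xs = sorted_list_of_multiset (image_mset f (mset_set I))"
  have image: "image_mset (\<lambda>h. c * f h) (mset_set I) = mset (map ((*) c) xs)"
    unfolding xs_def by (simp add: multiset.map_comp comp_def)
  have "sorted (map ((*) c) xs)"
    unfolding xs_def using assms(1)
    by (auto simp: sorted_map intro: sorted_wrt_mono_rel[OF _ sorted_sorted_list_of_multiset])
  hence "sorted_list_of_multiset (image_mset (\<lambda>h. c * f h) (mset_set I)) = map ((*) c) xs"
    unfolding image sorted_list_of_multiset_mset by (rule sorted_sort_id)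
  moreover have "length xs = card I"
    unfolding xs_def by (rule length_sorted_list_of_image_mset_set)
  ultimately show ?thesis
    unfolding kth_smallest_def xs_def[symmetric] using assms(2,3) by simp
qed

lemma conf_rank_bounds:
  assumes "1 / (real l + 1) \<le> \<alpha>" "\<alpha> < 1"
  shows "1 \<le> conf_rank l \<alpha>" "conf_rank l \<alpha> \<le> l"
proof -
  have "0 < (real l + 1) * (1 - \<alpha>)" using assms(2) by simp
  thus "1 \<le> conf_rank l \<alpha>" unfolding conf_rank_def by linarith
  have "1 \<le> (real l + 1) * \<alpha>"
    using assms(1) by (simp add: divide_le_eq mult.commute)
  hence "\<lceil>(real l + 1) * (1 - \<alpha>)\<rceil> \<le> int l" by (intro ceiling_le) (simp add: algebra_simps)
  thus "conf_rank l \<alpha> \<le> l" unfolding conf_rank_def by (metis nat_le_iff)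
qed

lemma score_const_weight:
  assumes "c > 0" "T \<noteq> {}" "bdd_above ((\<lambda>t. \<bar>y h t - g t\<bar>) ` T)"
  shows "score T y g (\<lambda>t. 1 / c) h = c * sup_dev T y g h"
proof -
  have "c * sup_dev T y g h = (SUP x\<in>(\<lambda>t. \<bar>y h t - g t\<bar>) ` T. c * x)"
    unfolding sup_dev_def using assms
    by (intro continuous_at_Sup_mono continuous_mult_left continuous_ident) (auto simp: mono_def mult_left_mono)
  thus ?thesis unfolding score_def by (simp add: image_image mult.commute)
qed

lemma band_size_cong:
  assumes "\<And>t. t \<in> T \<Longrightarrow> u t = u' t"
  shows "band_size T I r y g u = band_size T I r y g u'"
proof -
  have "score T y g u = score T y g u'"
    unfolding score_def using assms by (intro ext arg_cong[where f=Sup] image_cong) auto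
  thus ?thesis unfolding band_size_def using assms by (intro integral_cong) auto
qed

lemma band_size_normalized:
  assumes "integral T u \<noteq> 0"
  shows "band_size T I r y g (\<lambda>t. u t / integral T u)
           = 2 * kth_smallest r (score T y g (\<lambda>t. u t / integral T u)) I"
  unfolding band_size_def using assms by (simp add: mult.assoc)

lemma integral_pos_of_continuous_pos:
  fixes f :: "real \<Rightarrow> real"
  assumes "continuous_on {a..b} f" "a < b" "\<And>t. t \<in> {a..b} \<Longrightarrow> f t > 0"
  shows "integral {a..b} f > 0"
proof -
  have nonneg: "\<And>t. t \<in> {a..b} \<Longrightarrow> 0 \<le> f t"
    using assms(3) by (simp add: less_imp_le)
  have "a \<in> {a..b}" "f a \<noteq> 0"
    using assms(2) assms(3)[of a] by auto
  hence "integral {a..b} f \<noteq> 0"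
    using integral_eq_0_iff[OF assms(1,2) nonneg] by blast
  moreover have "integral {a..b} f \<ge> 0"
    using integral_nonneg[OF integrable_continuous_interval[OF assms(1)] nonneg] .
  ultimately show ?thesis by simp
qed

lemma continuous_eq_bound_of_integral_eq:
  fixes f :: "real \<Rightarrow> real"
  assumes "continuous_on {a..b} f" "a < b" "\<And>t. t \<in> {a..b} \<Longrightarrow> f t \<le> k"
    and "integral {a..b} f = (b - a) * k" "t \<in> {a..b}"
  shows "f t = k"
proof -
  have "integral {a..b} (\<lambda>t. k - f t) = 0"
    using assms by (simp add: integral_diff integrable_continuous_interval)
  moreover have "continuous_on {a..b} (\<lambda>t. k - f t)"
    using assms(1) by (intro continuous_intros)
  ultimately show ?thesis
    using integral_eq_0_iff[of a b "\<lambda>t. k - f t"] assms(2,3,5) by auto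
qed

lemma continuous_const_of_AE_const:
  fixes f :: "real \<Rightarrow> real"
  assumes "continuous_on {a..b} f" "a < b" "AE t in lebesgue. t \<in> {a..b} \<longrightarrow> f t = c"
    and "t \<in> {a..b}"
  shows "f t = c"
proof -
  obtain N where N: "negligible N" "{s. \<not> (s \<in> {a..b} \<longrightarrow> f s = c)} \<subseteq> N"
    using assms(3) by (auto simp: eventually_ae_filter_negligible)
  have "((\<lambda>t. \<bar>f t - c\<bar>) has_integral 0) {a..b}"
    by (rule has_integral_spike[OF N(1), of _ _ "\<lambda>t. 0"]) (use N(2) in auto)
  hence "integral {a..b} (\<lambda>t. \<bar>f t - c\<bar>) = 0"
    by (rule integral_unique)
  moreover have "continuous_on {a..b} (\<lambda>t. \<bar>f t - c\<bar>)"
    using assms(1) by (intro continuous_intros)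
  ultimately show ?thesis
    using integral_eq_0_iff[of a b "\<lambda>t. \<bar>f t - c\<bar>"] assms(2,4) by auto
qed

lemma continuous_on_Max_image:
  fixes F :: "'j \<Rightarrow> 'a::topological_space \<Rightarrow> real"
  assumes "finite S" "S \<noteq> {}" "\<And>j. j \<in> S \<Longrightarrow> continuous_on T (F j)"
  shows "continuous_on T (\<lambda>t. Max ((\<lambda>j. F j t) ` S))"
  using assms
proof (induction S rule: finite_ne_induct)
  case (insert x S)
  have "continuous_on T (\<lambda>t. max (F x t) (Max ((\<lambda>j. F j t) ` S)))"
    using insert by (intro continuous_on_max) auto
  thus ?case using insert by simp
qed simp

locale deviation_band =
  fixes a b :: real and I :: "nat set" and r :: nat
    and y :: "nat \<Rightarrow> real \<Rightarrow> real" and g :: "real \<Rightarrow> real"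
  assumes interval: "a < b"
    and finite_I: "finite I"
    and rank: "1 \<le> r" "r \<le> card I"
    and continuous_y: "\<And>j. j \<in> I \<Longrightarrow> continuous_on {a..b} (y j)"
    and continuous_g: "continuous_on {a..b} g"
begin

abbreviation k where "k \<equiv> kval {a..b} I r y g"
abbreviation H where "H \<equiv> H2set {a..b} I r y g"
abbreviation M where "M \<equiv> Mfun {a..b} I r y g"

lemma continuous_on_dev: "j \<in> I \<Longrightarrow> continuous_on {a..b} (\<lambda>t. \<bar>y j t - g t\<bar>)"
  using continuous_y continuous_g by (intro continuous_intros)

lemma bdd_above_dev: "j \<in> I \<Longrightarrow> bdd_above ((\<lambda>t. \<bar>y j t - g t\<bar>) ` {a..b})"
  by (intro bounded_imp_bdd_above compact_imp_bounded compact_continuous_image continuous_on_dev)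
    simp_all

lemma dev_le_sup_dev: "j \<in> I \<Longrightarrow> t \<in> {a..b} \<Longrightarrow> \<bar>y j t - g t\<bar> \<le> sup_dev {a..b} y g j"
  unfolding sup_dev_def by (intro cSUP_upper bdd_above_dev)

lemma H2set_subset: "H \<subseteq> I"
  unfolding H2set_def by auto

lemma card_H2set: "r \<le> card H"
  unfolding H2set_def kval_def using card_le_kth_smallest[OF finite_I rank] .

lemma H2set_nonempty: "H \<noteq> {}"
  using card_H2set rank(1) by auto

lemma finite_H2set: "finite H"
  using H2set_subset finite_I by (rule finite_subset)

lemma dev_le_Mfun: "j \<in> H \<Longrightarrow> \<bar>y j t - g t\<bar> \<le> M t"
  unfolding Mfun_def using finite_H2set by (intro Max_ge) auto

lemma Mfun_le_kval: "t \<in> {a..b} \<Longrightarrow> M t \<le> k"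
  unfolding Mfun_def using finite_H2set H2set_nonempty dev_le_sup_dev
  by (auto simp: H2set_def intro: order_trans)

lemma continuous_on_Mfun: "continuous_on {a..b} M"
  unfolding Mfun_def using finite_H2set H2set_nonempty H2set_subset
  by (intro continuous_on_Max_image continuous_on_dev) auto

lemma integral_Mfun_le: "integral {a..b} M \<le> (b - a) * k"
proof -
  have "integral {a..b} M \<le> integral {a..b} (\<lambda>t. k)"
    using continuous_on_Mfun Mfun_le_kval by (intro integral_le integrable_continuous_interval) auto
  thus ?thesis using interval by simp
qed

lemma band_size_uniform: "band_size {a..b} I r y g (\<lambda>t. 1 / (b - a)) = 2 * ((b - a) * k)"
proof -
  have "kth_smallest r (score {a..b} y g (\<lambda>t. 1 / (b - a))) I
      = kth_smallest r (\<lambda>j. (b - a) * sup_dev {a..b} y g j) I"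
    using interval by (intro kth_smallest_cong score_const_weight bdd_above_dev) auto
  also have "\<dots> = (b - a) * k"
    unfolding kval_def using interval rank by (intro kth_smallest_cmult) auto
  finally show ?thesis
    unfolding band_size_def using interval by simp
qed

end

locale positive_deviation_band = deviation_band +
  assumes Mfun_pos: "\<And>t. t \<in> {a..b} \<Longrightarrow> M t > 0"
begin

lemma integral_Mfun_pos: "integral {a..b} M > 0"
  using continuous_on_Mfun interval Mfun_pos by (rule integral_pos_of_continuous_pos)

lemma band_size_Mfun_le: "band_size {a..b} I r y g (\<lambda>t. M t / integral {a..b} M) \<le> 2 * integral {a..b} M"
proof -
  let ?IM = "integral {a..b} M"
  have "score {a..b} y g (\<lambda>t. M t / ?IM) j \<le> ?IM" if "j \<in> H" for j
    unfolding score_def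
  proof (intro cSUP_least)
    fix t assume "t \<in> {a..b}"
    thus "\<bar>y j t - g t\<bar> / (M t / ?IM) \<le> ?IM"
      using dev_le_Mfun[OF that] Mfun_pos integral_Mfun_pos
      by (simp add: divide_le_eq mult.commute mult_left_mono)
  qed (use interval in simp)
  hence "card H \<le> card {j \<in> I. score {a..b} y g (\<lambda>t. M t / ?IM) j \<le> ?IM}"
    using H2set_subset finite_I by (intro card_mono) auto
  hence "kth_smallest r (score {a..b} y g (\<lambda>t. M t / ?IM)) I \<le> ?IM"
    using card_H2set finite_I rank by (intro kth_smallest_le) auto
  thus ?thesis
    using band_size_normalized integral_Mfun_pos by simp
qed

lemma band_size_Mfun_le_uniform:
  "band_size {a..b} I r y g (\<lambda>t. M t / integral {a..b} M) \<le> band_size {a..b} I r y g (\<lambda>t. 1 / (b - a))"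
  using band_size_Mfun_le integral_Mfun_le unfolding band_size_uniform by linarith

lemma band_size_Mfun_eq_uniform_iff:
  "band_size {a..b} I r y g (\<lambda>t. 1 / (b - a)) = band_size {a..b} I r y g (\<lambda>t. M t / integral {a..b} M)
    \<longleftrightarrow> (\<exists>c. AE t in lebesgue. t \<in> {a..b} \<longrightarrow> M t = c)"
proof
  assume "band_size {a..b} I r y g (\<lambda>t. 1 / (b - a))
    = band_size {a..b} I r y g (\<lambda>t. M t / integral {a..b} M)"
  hence "integral {a..b} M = (b - a) * k"
    using band_size_Mfun_le integral_Mfun_le unfolding band_size_uniform by linarith
  hence "\<And>t. t \<in> {a..b} \<Longrightarrow> M t = k"
    using continuous_eq_bound_of_integral_eq[OF continuous_on_Mfun interval Mfun_le_kval] by blast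
  thus "\<exists>c. AE t in lebesgue. t \<in> {a..b} \<longrightarrow> M t = c" by auto
next
  assume "\<exists>c. AE t in lebesgue. t \<in> {a..b} \<longrightarrow> M t = c"
  then obtain c where M_const: "\<And>t. t \<in> {a..b} \<Longrightarrow> M t = c"
    using continuous_const_of_AE_const[OF continuous_on_Mfun interval] by blast
  have "integral {a..b} M = integral {a..b} (\<lambda>t. c)"
    using M_const by (rule integral_cong)
  hence "integral {a..b} M = (b - a) * c"
    using interval by simp
  moreover have "c > 0"
    using M_const[of a] Mfun_pos[of a] interval by simp
  ultimately show "band_size {a..b} I r y g (\<lambda>t. 1 / (b - a))
    = band_size {a..b} I r y g (\<lambda>t. M t / integral {a..b} M)"
    using M_const    by (intro band_size_cong) simp
qed

end

theorem theorem3: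
  fixes n m l :: nat and I1 I2 :: "nat set" and a b \<alpha> :: real
    and y :: "nat \<Rightarrow> real \<Rightarrow> real" and g :: "real \<Rightarrow> real"
  assumes part: "I1 \<union> I2 = {1..n}" "I1 \<inter> I2 = {}"
    and card1: "card I1 = m" "m \<ge> 1"
    and card2: "card I2 = l" "l \<ge> 1"
    and ab: "a < b"
    and cont_y: "\<forall>j\<in>{1..n}. continuous_on {a..b} (y j)"
    and cont_g: "continuous_on {a..b} g"
    and alpha: "1 / (real l + 1) \<le> \<alpha>" "\<alpha> < 1"
    and Mpos: "\<forall>t\<in>{a..b}. Mfun {a..b} I2 (conf_rank l \<alpha>) y g t > 0"
  shows "band_size {a..b} I2 (conf_rank l \<alpha>) y g (\<lambda>t. 1 / (b - a))
           \<ge> band_size {a..b} I2 (conf_rank l \<alpha>) y g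
               (\<lambda>t. Mfun {a..b} I2 (conf_rank l \<alpha>) y g t
                     / integral {a..b} (Mfun {a..b} I2 (conf_rank l \<alpha>) y g))
         \<and> (band_size {a..b} I2 (conf_rank l \<alpha>) y g (\<lambda>t. 1 / (b - a))
              = band_size {a..b} I2 (conf_rank l \<alpha>) y g
                  (\<lambda>t. Mfun {a..b} I2 (conf_rank l \<alpha>) y g t
                        / integral {a..b} (Mfun {a..b} I2 (conf_rank l \<alpha>) y g))
            \<longleftrightarrow> (\<exists>c. AE t in lebesgue. t \<in> {a..b} \<longrightarrow> Mfun {a..b} I2 (conf_rank l \<alpha>) y g t = c))"
proof -
  interpret positive_deviation_band a b I2 "conf_rank l \<alpha>" y g
  proof
    show "finite I2" using card2 by (metis card.infinite not_one_le_zero)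
    show "1 \<le> conf_rank l \<alpha>" "conf_rank l \<alpha> \<le> card I2"
      using conf_rank_bounds[OF alpha] card2 by simp_all
    show "\<And>j. j \<in> I2 \<Longrightarrow> continuous_on {a..b} (y j)" using part cont_y by blast
  qed (use ab cont_g Mpos in auto)
  show ?thesis
    using band_size_Mfun_le_uniform band_size_Mfun_eq_uniform_iff by simp
qed

end
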